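(* Let $n\ge 2$, let $\mathbf X=(X_1,\dots,X_n)$ be a random vector whose marginals are uniform on $[0,1]$, let $C$ be its $n$-copula, and let $\alpha\in\{-1,1\}^n$. Let $I=\{i:\alpha_i=-1\}$ and $J=\{1,\dots,n\}\setminus I=\{i:\alpha_i=1\}$. Then $$\rho_n^\alpha(C)=\frac{2^n(n+1)}{2^n-(n+1)}\sum_{S\subseteq J}(-1)^{|S|}\,\frac{2^{|I|+|S|}-(|I|+|S|+1)}{2^{|I|+|S|}(|I|+|S|+1)}\,\rho^-_{\mathbf X_{I\cup S}},$$ where the terms with $|I\cup S|\le 1$ are taken to be $0$ (their coefficient $2^m-(m+1)$ vanishes for $m\in\{0,1\}$).
   Context: For $\alpha\in\{-1,1\}^n$ and $\mathbf X$ with uniform $[0,1]$ marginals and copula $C$: $Q_\alpha(u)=\mathbb P\big[\bigcap_{i=1}^n\{\alpha_iX_i>\alpha_iu_i\}\big]-\prod_{i=1}^n\mathbb P[\alpha_iX_i>\alpha_iu_i]$ and $\rho_n^\alpha(C)=\frac{2^n(n+1)}{2^n-(n+1)}\int_{[0,1]^n}Q_\alpha(u)\,du$. For $K\subseteq\{1,\dots,n\}$ with $k=|K|\ge 2$, $\mathbf X_K=(X_i)_{i\in K}$, $C_K$ denotes its $k$-copula (the $K$-marginal of $C$, i.e. $C$ with the arguments outside $K$ set to $1$), and $\rho^-_{\mathbf X_K}=\frac{k+1}{2^k-(k+1)}\Big(2^k\int_{[0,1]^k}C_K(\mathbf u)\,d\mathbf u-1\Big)$ (equivalently $\rho_k^{(-1,\dots,-1)}(C_K)$).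 *)

theory Defs
  imports "HOL-Probability.Probability"
begin

definition unit_cube :: "nat set \<Rightarrow> (nat \<Rightarrow> real) measure" where
  "unit_cube K = PiM K (\<lambda>_. restrict_space lborel {0..1::real})"

definition Q_alpha :: "'a measure \<Rightarrow> (nat \<Rightarrow> 'a \<Rightarrow> real) \<Rightarrow> nat \<Rightarrow> (nat \<Rightarrow> real)
    \<Rightarrow> (nat \<Rightarrow> real) \<Rightarrow> real" where
  "Q_alpha M X n \<alpha> u =
     measure M {\<omega> \<in> space M. \<forall>i<n. \<alpha> i * X i \<omega> > \<alpha> i * u i}
     - (\<Prod>i<n. measure M {\<omega> \<in> space M. \<alpha> i * X i \<omega> > \<alpha> i * u i})"

definition rho_alpha :: "'a measure \<Rightarrow> (nat \<Rightarrow> 'a \<Rightarrow> real) \<Rightarrow> nat \<Rightarrow> (nat \<Rightarrow> real) \<Rightarrow> real" where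
  "rho_alpha M X n \<alpha> =
     (2^n * (real n + 1)) / (2^n - (real n + 1)) *
     (LINT u | unit_cube {..<n}. Q_alpha M X n \<alpha> u)"

text \<open>The K-marginal copula C_K(u) = P[X_i <= u_i for all i in K] (uniform marginals).\<close>
definition copula_marg :: "'a measure \<Rightarrow> (nat \<Rightarrow> 'a \<Rightarrow> real) \<Rightarrow> nat set \<Rightarrow> (nat \<Rightarrow> real) \<Rightarrow> real" where
  "copula_marg M X K u = measure M {\<omega> \<in> space M. \<forall>i\<in>K. X i \<omega> \<le> u i}"

definition rho_minus :: "'a measure \<Rightarrow> (nat \<Rightarrow> 'a \<Rightarrow> real) \<Rightarrow> nat set \<Rightarrow> real" where
  "rho_minus M X K =
     (real (card K) + 1) / (2 ^ card K - (real (card K) + 1)) *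
     (2 ^ card K * (LINT u | unit_cube K. copula_marg M X K u) - 1)"

end

theory Submission
  imports Defs
begin

text \<open>
  Outside the null sets where some X i = u i, the event "\<alpha> i X i > \<alpha> i u i for all i" says
  that X i \<le> u i for i \<in> I and X j > u j for j \<in> J. Expanding the factors for J as
  1 - [X j \<le> u j] (inclusion-exclusion) gives
  Q_alpha(u) = \<Sum>(S \<subseteq> J) (-1)^|S| C_(I \<union> S)(u) - \<Prod>i (u i or 1 - u i).
  The integral of C_K over the n-cube equals its integral over the K-cube, and solving the
  definition of rho^- for the latter gives \<integral>C_K = rho_weight k * rho^-_K + 2^-k with
  rho_weight k = (2^k - k - 1) / (2^k (k + 1)); this also holds for k \<le> 1, where rho_weight k = 0 and
  \<integral>C_K = 2^-k. Finally the constants (-1)^|S| 2^-(|I|+|S|) sum to 2^-n, which cancels the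
  integral of the product term.
\<close>

lemma prod_of_bool:
  "finite K \<Longrightarrow> (\<Prod>i\<in>K. of_bool (P i) :: 'b::comm_semiring_1) = of_bool (\<forall>i\<in>K. P i)"
  by (induction rule: finite_induct) auto

lemma prod_one_minus_eq_sum_Pow:
  fixes g :: "'a \<Rightarrow> 'b::comm_ring_1"
  assumes "finite J"
  shows "(\<Prod>j\<in>J. 1 - g j) = (\<Sum>S\<in>Pow J. (-1) ^ card S * (\<Prod>j\<in>S. g j))"
proof -
  have "(\<Prod>j\<in>J. 1 - g j) = (\<Sum>S\<in>Pow J. (\<Prod>j\<in>S. - g j) * (\<Prod>j\<in>J-S. 1))"
    using prod_add[OF assms, of "\<lambda>j. - g j" "\<lambda>_. 1"] by simp
  also have "\<dots> = (\<Sum>S\<in>Pow J. (-1) ^ card S * (\<Prod>j\<in>S. g j))"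
    by (intro sum.cong refl) (simp add: prod_uminus)
  finally show ?thesis .
qed

lemma sum_Pow_alternating_power:
  fixes x :: "'b::comm_ring_1"
  assumes "finite J"
  shows "(\<Sum>S\<in>Pow J. (-1) ^ card S * x ^ (k + card S)) = x ^ k * (1 - x) ^ card J"
  using prod_one_minus_eq_sum_Pow[OF assms, of "\<lambda>_. x"]
  by (simp add: power_add sum_distrib_left mult.left_commute)

lemma of_bool_orthant_eq_sum_Pow:
  assumes "finite I" "finite J"
  shows "(of_bool ((\<forall>i\<in>I. P i) \<and> (\<forall>j\<in>J. \<not> P j)) :: 'b::comm_ring_1)
    = (\<Sum>S\<in>Pow J. (-1) ^ card S * of_bool (\<forall>i\<in>I \<union> S. P i))"
proof -
  have "(of_bool ((\<forall>i\<in>I. P i) \<and> (\<forall>j\<in>J. \<not> P j)) :: 'b)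
      = (\<Prod>i\<in>I. of_bool (P i)) * (\<Prod>j\<in>J. 1 - of_bool (P j))"
  proof -
    have "(\<Prod>j\<in>J. 1 - of_bool (P j) :: 'b) = of_bool (\<forall>j\<in>J. \<not> P j)"
      unfolding prod_of_bool[OF assms(2), of "\<lambda>j. \<not> P j", symmetric] by (simp add: of_bool_not_iff)
    then show ?thesis using assms by (simp add: prod_of_bool)
  qed
  also have "\<dots> = (\<Sum>S\<in>Pow J. (-1) ^ card S * ((\<Prod>i\<in>I. of_bool (P i)) * (\<Prod>j\<in>S. of_bool (P j))))"
    by (simp add: prod_one_minus_eq_sum_Pow assms sum_distrib_left mult.left_commute)
  also have "\<dots> = (\<Sum>S\<in>Pow J. (-1) ^ card S * of_bool (\<forall>i\<in>I \<union> S. P i))"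
    using assms by (intro sum.cong refl) (auto simp: prod_of_bool finite_subset)
  finally show ?thesis .
qed

lemma measure_uniform_unit:
  assumes "f \<in> borel_measurable M" "distr M lborel f = uniform_measure lborel {0..1::real}"
    and "B \<in> sets borel"
  shows "measure M {\<omega> \<in> space M. f \<omega> \<in> B} = measure lborel ({0..1} \<inter> B)"
proof -
  have "measure M {\<omega> \<in> space M. f \<omega> \<in> B} = measure (distr M lborel f) B"
    using assms by (subst measure_distr) (auto intro!: arg_cong[where f="measure M"])
  also have "\<dots> = measure lborel ({0..1} \<inter> B)"
    using assms by (subst assms(2)) (simp add: emeasure_lborel_Icc)
  finally show ?thesis .
qed

lemma measure_uniform_unit_interval:
  assumes "f \<in> borel_measurable M" "distr M lborel f = uniform_measure lborel {0..1::real}"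
    and "t \<in> {0..1}"
  shows "measure M {\<omega> \<in> space M. f \<omega> \<le> t} = t"
    and "measure M {\<omega> \<in> space M. f \<omega> < t} = t"
    and "measure M {\<omega> \<in> space M. t < f \<omega>} = 1 - t"
proof -
  have "{0..1} \<inter> {..<t} = {0..<t}" "{0..1} \<inter> {t<..} = {t<..1}"
    using assms(3) by auto
  with assms(3) measure_uniform_unit[OF assms(1,2), of "{..t}"]
    measure_uniform_unit[OF assms(1,2), of "{..<t}"] measure_uniform_unit[OF assms(1,2), of "{t<..}"]
  show "measure M {\<omega> \<in> space M. f \<omega> \<le> t} = t"
    and "measure M {\<omega> \<in> space M. f \<omega> < t} = t"
    and "measure M {\<omega> \<in> space M. t < f \<omega>} = 1 - t"
    by auto
qed

lemma AE_uniform_neq: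
  assumes "prob_space M" "f \<in> borel_measurable M"
    and "distr M lborel f = uniform_measure lborel {0..1::real}"
  shows "AE \<omega> in M. f \<omega> \<noteq> t"
proof (rule AE_I')
  have "measure M {\<omega> \<in> space M. f \<omega> \<in> {t}} = 0"
    using measure_uniform_unit[OF assms(2,3), of "{t}"] by (simp add: Int_insert_right)
  then show "{\<omega> \<in> space M. f \<omega> = t} \<in> null_sets M"
    using assms by (intro null_setsI) (auto simp: finite_measure.emeasure_eq_measure prob_space_def)
qed auto

lemma measure_uniform_signed_greater:
  assumes "f \<in> borel_measurable M" "distr M lborel f = uniform_measure lborel {0..1::real}"
    and "t \<in> {0..1}" "a \<in> {-1, 1}"
  shows "measure M {\<omega> \<in> space M. a * t < a * f \<omega>} = (1 + a) / 2 - a * t"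
  using assms(4) measure_uniform_unit_interval(2,3)[OF assms(1-3)] by auto

abbreviation unit_interval :: "real measure" where
  "unit_interval \<equiv> restrict_space lborel {0..1}"

lemma prob_space_unit_interval: "prob_space unit_interval"
  by (rule prob_space_restrict_space) (auto simp: emeasure_lborel_Icc)

lemma product_prob_space_unit_interval: "product_prob_space (\<lambda>_::nat. unit_interval)"
  unfolding product_prob_space_def product_prob_space_axioms_def product_sigma_finite_def
  by (simp add: prob_space_imp_sigma_finite prob_space_unit_interval)

lemma prob_space_unit_cube: "prob_space (unit_cube K)"
  unfolding unit_cube_def by (rule prob_space_PiM) (rule prob_space_unit_interval)

lemma space_unit_cube: "space (unit_cube K) = PiE K (\<lambda>_. {0..1})"
  unfolding unit_cube_def by (simp add: space_PiM)

lemma measurable_unit_cube_component: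
  assumes "i \<in> K"
  shows "(\<lambda>u. u i) \<in> borel_measurable (unit_cube K)"
proof -
  have "(\<lambda>u. u i) \<in> measurable (PiM K (\<lambda>_. unit_interval)) unit_interval"
    by (rule measurable_component_singleton[OF assms])
  moreover have "(\<lambda>x. x) \<in> measurable unit_interval borel"
    by (rule measurable_restrict_space1) simp
  ultimately show ?thesis
    unfolding unit_cube_def by (rule measurable_compose)
qed

lemma integrable_unit_interval_affine: "integrable unit_interval (\<lambda>x. a + b * x)"
proof -
  interpret prob_space unit_interval by (rule prob_space_unit_interval)
  have "\<bar>a + b * x\<bar> \<le> \<bar>a\<bar> + \<bar>b\<bar>" if "x \<in> {0..1}" for x
    using that abs_triangle_ineq[of a "b * x"] mult_left_le[of "\<bar>x\<bar>" "\<bar>b\<bar>"]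
    by (auto simp: abs_mult)
  then show ?thesis
    by (intro integrable_const_bound[where B="\<bar>a\<bar> + \<bar>b\<bar>"])
       (auto simp: AE_restrict_space_iff intro!: measurable_restrict_space1)
qed

lemma integral_unit_interval_affine: "integral\<^sup>L unit_interval (\<lambda>x. a + b * x) = a + b / 2"
proof -
  have power_integrable: "integrable lborel (\<lambda>x. x ^ k * indicator {0..1} x :: real)" for k
    using borel_integrable_atLeastAtMost'[of 0 1 "\<lambda>x. x ^ k :: real"]
    by (simp add: set_integrable_def mult.commute continuous_intros)
  have "integral\<^sup>L unit_interval (\<lambda>x. a + b * x)
      = (\<integral>x. a * (x ^ 0 * indicator {0..1} x) + b * (x ^ 1 * indicator {0..1} x) \<partial>lborel)"
    by (subst integral_restrict_space) (auto intro!: Bochner_Integration.integral_cong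
        simp: algebra_simps indicator_def)
  also have "\<dots> = a * (\<integral>x. x ^ 0 * indicator {0..1} x \<partial>lborel)
      + b * (\<integral>x. x ^ 1 * indicator {0..1} x \<partial>lborel)"
    using power_integrable[of 1] by (subst Bochner_Integration.integral_add) (auto intro!: power_integrable)
  also have "\<dots> = a + b / 2"
    by (simp only: integral_power) simp
  finally show ?thesis .
qed

lemma integrable_unit_cube_prod_affine:
  assumes "finite K"
  shows "integrable (unit_cube K) (\<lambda>u. \<Prod>i\<in>K. a i + b i * u i)"
proof -
  interpret product_prob_space "\<lambda>_::nat. unit_interval" by (rule product_prob_space_unit_interval)
  show ?thesis
    unfolding unit_cube_def using assms
    by (rule product_integrable_prod) (auto intro: integrable_unit_interval_affine)
qed

lemma integral_unit_cube_prod_affine: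
  assumes "finite K"
  shows "(\<integral>u. (\<Prod>i\<in>K. a i + b i * u i) \<partial>unit_cube K) = (\<Prod>i\<in>K. a i + b i / 2)"
proof -
  interpret product_prob_space "\<lambda>_::nat. unit_interval" by (rule product_prob_space_unit_interval)
  show ?thesis
    unfolding unit_cube_def using assms
    by (subst product_integral_prod) (auto intro: integrable_unit_interval_affine
        simp: integral_unit_interval_affine)
qed

lemma integral_unit_cube_restrict:
  fixes f :: "(nat \<Rightarrow> real) \<Rightarrow> real"
  assumes "K \<subseteq> L" "finite L" "f \<in> borel_measurable (unit_cube K)"
  shows "(\<integral>u. f (restrict u K) \<partial>unit_cube L) = integral\<^sup>L (unit_cube K) f"
proof -
  interpret product_prob_space "\<lambda>_::nat. unit_interval" by (rule product_prob_space_unit_interval)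
  have "unit_cube K = distr (unit_cube L) (unit_cube K) (\<lambda>u. restrict u K)"
    unfolding unit_cube_def by (rule distr_restrict[OF assms(1,2)])
  then have "integral\<^sup>L (unit_cube K) f
      = integral\<^sup>L (distr (unit_cube L) (unit_cube K) (\<lambda>u. restrict u K)) f"
    by simp
  also have "\<dots> = (\<integral>u. f (restrict u K) \<partial>unit_cube L)"
    by (rule integral_distr) (use assms in \<open>auto simp: unit_cube_def intro: measurable_restrict_subset\<close>)
  finally show ?thesis by simp
qed

lemma measurable_copula_marg:
  assumes "prob_space M" "finite K" "\<And>i. i \<in> K \<Longrightarrow> X i \<in> borel_measurable M"
    and "\<And>i. i \<in> K \<Longrightarrow> (\<lambda>u. u i) \<in> borel_measurable N"
  shows "copula_marg M X K \<in> borel_measurable N"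
proof -
  interpret prob_space M by fact
  let ?Q = "{p \<in> space (N \<Otimes>\<^sub>M M). \<forall>i\<in>K. X i (snd p) \<le> fst p i}"
  have "?Q \<in> sets (N \<Otimes>\<^sub>M M)"
  proof (rule sets.sets_Collect_finite_All[OF _ assms(2)])
    fix i assume "i \<in> K"
    then have [measurable]: "X i \<in> borel_measurable M" "(\<lambda>u. u i) \<in> borel_measurable N"
      using assms by auto
    show "{p \<in> space (N \<Otimes>\<^sub>M M). X i (snd p) \<le> fst p i} \<in> sets (N \<Otimes>\<^sub>M M)"
      by measurable
  qed
  then have "(\<lambda>u. enn2real (emeasure M (Pair u -` ?Q))) \<in> borel_measurable N"
    by (intro borel_measurable_enn2real measurable_emeasure_Pair)
  moreover have "enn2real (emeasure M (Pair u -` ?Q)) = copula_marg M X K u" if "u \<in> space N" for u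
  proof -
    have "Pair u -` ?Q = {\<omega> \<in> space M. \<forall>i\<in>K. X i \<omega> \<le> u i}"
      using that by (simp add: space_pair_measure set_eq_iff)
    then show ?thesis unfolding copula_marg_def measure_def by simp
  qed
  ultimately show ?thesis
    by (simp cong: measurable_cong)
qed

lemma measurable_copula_marg_unit_cube:
  assumes "prob_space M" "K \<subseteq> L" "finite L" "\<And>i. i \<in> K \<Longrightarrow> X i \<in> borel_measurable M"
  shows "copula_marg M X K \<in> borel_measurable (unit_cube L)"
  using assms finite_subset
  by (intro measurable_copula_marg) (auto intro: measurable_unit_cube_component)

lemma integrable_copula_marg:
  assumes "prob_space M" "K \<subseteq> L" "finite L" "\<And>i. i \<in> K \<Longrightarrow> X i \<in> borel_measurable M"
  shows "integrable (unit_cube L) (copula_marg M X K)"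
proof -
  interpret cube: prob_space "unit_cube L" by (rule prob_space_unit_cube)
  interpret prob_space M by fact
  show ?thesis
    by (rule cube.integrable_const_bound[where B=1])
       (simp_all add: copula_marg_def measurable_copula_marg_unit_cube assms)
qed

lemma integral_copula_marg_superset:
  assumes "prob_space M" "K \<subseteq> L" "finite L" "\<And>i. i \<in> K \<Longrightarrow> X i \<in> borel_measurable M"
  shows "integral\<^sup>L (unit_cube L) (copula_marg M X K) = integral\<^sup>L (unit_cube K) (copula_marg M X K)"
proof -
  have "integral\<^sup>L (unit_cube L) (copula_marg M X K)
      = (\<integral>u. copula_marg M X K (restrict u K) \<partial>unit_cube L)"
    by (rule Bochner_Integration.integral_cong) (auto simp: copula_marg_def)
  also have "\<dots> = integral\<^sup>L (unit_cube K) (copula_marg M X K)"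
    using assms finite_subset
    by (intro integral_unit_cube_restrict measurable_copula_marg_unit_cube) auto
  finally show ?thesis .
qed

lemma copula_marg_card_le_1:
  assumes "prob_space M" "card K \<le> 1" "finite K"
    and "\<And>i. i \<in> K \<Longrightarrow> X i \<in> borel_measurable M"
    and "\<And>i. i \<in> K \<Longrightarrow> distr M lborel (X i) = uniform_measure lborel {0..1}"
    and "\<And>i. i \<in> K \<Longrightarrow> u i \<in> {0..1}"
  shows "copula_marg M X K u = (\<Prod>i\<in>K. u i)"
proof (cases "K = {}")
  case True
  then show ?thesis
    using prob_space.prob_space[OF assms(1)] by (simp add: copula_marg_def)
next
  case False
  then obtain j where "K = {j}"
    using assms(2,3) by (metis card_0_eq card_1_singletonE le_SucE le_zero_eq One_nat_def)
  then show ?thesis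
    using measure_uniform_unit_interval(1)[OF assms(4-6)] by (simp add: copula_marg_def)
qed

lemma integral_copula_marg_card_le_1:
  assumes "prob_space M" "card K \<le> 1" "finite K"
    and "\<And>i. i \<in> K \<Longrightarrow> X i \<in> borel_measurable M"
    and "\<And>i. i \<in> K \<Longrightarrow> distr M lborel (X i) = uniform_measure lborel {0..1}"
  shows "integral\<^sup>L (unit_cube K) (copula_marg M X K) = (1/2) ^ card K"
proof -
  have "integral\<^sup>L (unit_cube K) (copula_marg M X K) = (\<integral>u. (\<Prod>i\<in>K. 0 + 1 * u i) \<partial>unit_cube K)"
    using assms by (intro Bochner_Integration.integral_cong refl)
      (auto simp: space_unit_cube intro!: copula_marg_card_le_1[OF assms])
  also have "\<dots> = (1/2) ^ card K"
    using assms(3) by (simp only: integral_unit_cube_prod_affine) simp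
  finally show ?thesis .
qed

definition rho_weight :: "nat \<Rightarrow> real" where
  "rho_weight m = (2 ^ m - (real m + 1)) / (2 ^ m * (real m + 1))"

lemma rho_weight_eq_0: "m \<le> 1 \<Longrightarrow> rho_weight m = 0"
  by (cases m) (auto simp: rho_weight_def)

lemma real_Suc_less_two_power: "2 \<le> m \<Longrightarrow> real m + 1 < 2 ^ m"
  by (induction m rule: nat_induct_at_least) auto

lemma rho_weight_mult: "2 \<le> m \<Longrightarrow> rho_weight m * ((real m + 1) / (2 ^ m - (real m + 1))) = 1 / 2 ^ m"
  using real_Suc_less_two_power[of m] by (simp add: rho_weight_def)

lemma integral_copula_marg_eq_rho_minus:
  assumes "prob_space M" "finite K"
    and "\<And>i. i \<in> K \<Longrightarrow> X i \<in> borel_measurable M"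
    and "\<And>i. i \<in> K \<Longrightarrow> distr M lborel (X i) = uniform_measure lborel {0..1}"
  shows "integral\<^sup>L (unit_cube K) (copula_marg M X K)
    = rho_weight (card K) * rho_minus M X K + (1/2) ^ card K"
proof (cases "card K \<le> 1")
  case True
  then show ?thesis
    using assms by (simp add: rho_weight_eq_0 integral_copula_marg_card_le_1)
next
  case False
  then have "2 \<le> card K"
    by simp
  then show ?thesis
    unfolding rho_minus_def mult.assoc[symmetric] rho_weight_mult[OF \<open>2 \<le> card K\<close>]
    by (simp add: field_simps)
qed

lemma measure_orthant_eq_sum_copula_marg:
  fixes X :: "nat \<Rightarrow> 'a \<Rightarrow> real" and \<alpha> u :: "nat \<Rightarrow> real"
  assumes "prob_space M"
    and Xm: "\<And>i. i < n \<Longrightarrow> X i \<in> borel_measurable M"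
    and Xd: "\<And>i. i < n \<Longrightarrow> distr M lborel (X i) = uniform_measure lborel {0..1}"
    and \<alpha>: "\<And>i. i < n \<Longrightarrow> \<alpha> i \<in> {-1, 1}"
    and u: "\<And>i. i < n \<Longrightarrow> u i \<in> {0..1}"
  defines "I \<equiv> {i. i < n \<and> \<alpha> i = -1}" and "J \<equiv> {i. i < n \<and> \<alpha> i = 1}"
  shows "measure M {\<omega> \<in> space M. \<forall>i<n. \<alpha> i * u i < \<alpha> i * X i \<omega>}
    = (\<Sum>S\<in>Pow J. (-1) ^ card S * copula_marg M X (I \<union> S) u)"
proof -
  interpret prob_space M by fact
  define E where "E = {\<omega> \<in> space M. \<forall>i<n. \<alpha> i * u i < \<alpha> i * X i \<omega>}"
  define F where "F K = {\<omega> \<in> space M. \<forall>i\<in>K. X i \<omega> \<le> u i}" for K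
  have fin: "finite I" "finite J"
    unfolding I_def J_def by auto
  have IJ: "I \<union> J = {..<n}"
    using \<alpha> unfolding I_def J_def by force
  have E: "E \<in> sets M"
    unfolding E_def using Xm by measurable
  have F: "F (I \<union> S) \<in> sets M" if "S \<in> Pow J" for S
    unfolding F_def using Xm that fin IJ finite_subset[of S J]
    by (intro sets.sets_Collect_finite_All) (measurable, auto)
  have "AE \<omega> in M. \<forall>i\<in>{..<n}. X i \<omega> \<noteq> u i"
    using Xm Xd by (subst AE_finite_all) (auto intro: AE_uniform_neq[OF assms(1)])
  then have "AE \<omega> in M. (indicator E \<omega> :: real)
      = (\<Sum>S\<in>Pow J. (-1) ^ card S * indicator (F (I \<union> S)) \<omega>)"
  proof (rule AE_mp[OF _ AE_I2], intro impI)
    fix \<omega> assume \<omega>: "\<omega> \<in> space M" "\<forall>i\<in>{..<n}. X i \<omega> \<noteq> u i"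
    have sign: "\<alpha> i * u i < \<alpha> i * X i \<omega> \<longleftrightarrow> (if \<alpha> i = -1 then X i \<omega> \<le> u i else \<not> X i \<omega> \<le> u i)"
      if "i < n" for i
      using \<alpha>[OF that] bspec[OF \<omega>(2), of i] that by auto
    have "\<omega> \<in> E \<longleftrightarrow> (\<forall>i\<in>I. X i \<omega> \<le> u i) \<and> (\<forall>j\<in>J. \<not> X j \<omega> \<le> u j)"
      using \<omega>(1) \<alpha> unfolding E_def I_def J_def by (auto simp: sign)
    then show "(indicator E \<omega> :: real) = (\<Sum>S\<in>Pow J. (-1) ^ card S * indicator (F (I \<union> S)) \<omega>)"
      using \<omega>(1) of_bool_orthant_eq_sum_Pow[OF fin, of "\<lambda>i. X i \<omega> \<le> u i"]
      by (simp add: indicator_def F_def)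
  qed
  then have "measure M E = (\<integral>\<omega>. (\<Sum>S\<in>Pow J. (-1) ^ card S * indicator (F (I \<union> S)) \<omega>) \<partial>M)"
    using E F by (subst integral_cong_AE[symmetric]) auto
  also have "\<dots> = (\<Sum>S\<in>Pow J. (-1) ^ card S * measure M (F (I \<union> S)))"
    using F by (subst Bochner_Integration.integral_sum) (auto simp: emeasure_eq_measure)
  finally show ?thesis
    unfolding E_def F_def copula_marg_def by simp
qed

lemma integral_Q_alpha_eq_sum_copula_marg:
  fixes X :: "nat \<Rightarrow> 'a \<Rightarrow> real" and \<alpha> :: "nat \<Rightarrow> real"
  assumes "prob_space M"
    and Xm: "\<And>i. i < n \<Longrightarrow> X i \<in> borel_measurable M"
    and Xd: "\<And>i. i < n \<Longrightarrow> distr M lborel (X i) = uniform_measure lborel {0..1}"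
    and \<alpha>: "\<And>i. i < n \<Longrightarrow> \<alpha> i \<in> {-1, 1}"
  defines "I \<equiv> {i. i < n \<and> \<alpha> i = -1}" and "J \<equiv> {i. i < n \<and> \<alpha> i = 1}"
  shows "integral\<^sup>L (unit_cube {..<n}) (Q_alpha M X n \<alpha>)
    = (\<Sum>S\<in>Pow J. (-1) ^ card S * integral\<^sup>L (unit_cube (I \<union> S)) (copula_marg M X (I \<union> S)))
      - (1/2) ^ n"
proof -
  let ?C = "\<lambda>u. \<Sum>S\<in>Pow J. (-1) ^ card S * copula_marg M X (I \<union> S) u"
  let ?P = "\<lambda>u. \<Prod>i<n. (1 + \<alpha> i) / 2 + (- \<alpha> i) * u i"
  have sub: "I \<union> S \<subseteq> {..<n}" if "S \<in> Pow J" for S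
    using that unfolding I_def J_def by auto
  have Q: "Q_alpha M X n \<alpha> u = ?C u - ?P u" if cube: "u \<in> space (unit_cube {..<n})" for u
  proof -
    have u: "u i \<in> {0..1}" if "i < n" for i
      using PiE_mem[OF cube[unfolded space_unit_cube], of i] that by simp
    show ?thesis
      unfolding Q_alpha_def I_def J_def
      using measure_orthant_eq_sum_copula_marg[OF assms(1) Xm Xd \<alpha> u]
        measure_uniform_signed_greater[OF Xm Xd u \<alpha>]
      by simp
  qed
  have integrable_C: "integrable (unit_cube {..<n}) (copula_marg M X (I \<union> S))" if "S \<in> Pow J" for S
    using sub[OF that] Xm by (intro integrable_copula_marg[OF assms(1)]) auto
  have "integral\<^sup>L (unit_cube {..<n}) (Q_alpha M X n \<alpha>)
      = integral\<^sup>L (unit_cube {..<n}) (\<lambda>u. ?C u - ?P u)"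
    by (rule Bochner_Integration.integral_cong) (simp_all add: Q)
  also have "\<dots> = integral\<^sup>L (unit_cube {..<n}) ?C - integral\<^sup>L (unit_cube {..<n}) ?P"
    by (intro Bochner_Integration.integral_diff Bochner_Integration.integrable_sum
          integrable_mult_right integrable_C integrable_unit_cube_prod_affine) auto
  also have "integral\<^sup>L (unit_cube {..<n}) ?C
      = (\<Sum>S\<in>Pow J. (-1) ^ card S * integral\<^sup>L (unit_cube (I \<union> S)) (copula_marg M X (I \<union> S)))"
  proof -
    have "integral\<^sup>L (unit_cube {..<n}) (copula_marg M X (I \<union> S))
        = integral\<^sup>L (unit_cube (I \<union> S)) (copula_marg M X (I \<union> S))" if "S \<in> Pow J" for S
      using sub[OF that] Xm by (intro integral_copula_marg_superset[OF assms(1)]) auto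
    then show ?thesis
      by (subst Bochner_Integration.integral_sum) (auto intro!: sum.cong integrable_C)
  qed
  also have "integral\<^sup>L (unit_cube {..<n}) ?P = (1/2) ^ n"
    by (subst integral_unit_cube_prod_affine) (simp_all add: add_divide_distrib)
  finally show ?thesis .
qed

lemma integral_Q_alpha_eq_sum_rho_minus:
  fixes X :: "nat \<Rightarrow> 'a \<Rightarrow> real" and \<alpha> :: "nat \<Rightarrow> real"
  assumes "prob_space M"
    and Xm: "\<And>i. i < n \<Longrightarrow> X i \<in> borel_measurable M"
    and Xd: "\<And>i. i < n \<Longrightarrow> distr M lborel (X i) = uniform_measure lborel {0..1}"
    and \<alpha>: "\<And>i. i < n \<Longrightarrow> \<alpha> i \<in> {-1, 1}"
  defines "I \<equiv> {i. i < n \<and> \<alpha> i = -1}" and "J \<equiv> {i. i < n \<and> \<alpha> i = 1}"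
  shows "integral\<^sup>L (unit_cube {..<n}) (Q_alpha M X n \<alpha>)
    = (\<Sum>S\<in>Pow J. (-1) ^ card S * rho_weight (card I + card S) * rho_minus M X (I \<union> S))"
proof -
  have "finite I" "finite J" "I \<inter> J = {}" "I \<union> J = {..<n}"
    using \<alpha> unfolding I_def J_def by force+
  then have card_IJ: "card I + card J = n"
    by (metis card_Un_disjoint card_lessThan)
  have "(-1) ^ card S * integral\<^sup>L (unit_cube (I \<union> S)) (copula_marg M X (I \<union> S))
      = (-1) ^ card S * rho_weight (card I + card S) * rho_minus M X (I \<union> S)
        + (-1) ^ card S * (1/2) ^ (card I + card S)" if "S \<in> Pow J" for S
  proof -
    have "finite (I \<union> S)" "I \<union> S \<subseteq> {..<n}" "card (I \<union> S) = card I + card S"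
      using that \<open>finite I\<close> \<open>finite J\<close> \<open>I \<inter> J = {}\<close> \<open>I \<union> J = {..<n}\<close> finite_subset[of S J]
      by (auto intro: card_Un_disjoint)
    moreover have "integral\<^sup>L (unit_cube (I \<union> S)) (copula_marg M X (I \<union> S))
        = rho_weight (card (I \<union> S)) * rho_minus M X (I \<union> S) + (1/2) ^ card (I \<union> S)"
      using calculation Xm Xd by (intro integral_copula_marg_eq_rho_minus[OF assms(1)]) auto
    ultimately show ?thesis
      by (simp add: algebra_simps)
  qed
  then have "(\<Sum>S\<in>Pow J. (-1) ^ card S * integral\<^sup>L (unit_cube (I \<union> S)) (copula_marg M X (I \<union> S)))
      = (\<Sum>S\<in>Pow J. (-1) ^ card S * rho_weight (card I + card S) * rho_minus M X (I \<union> S))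
        + (\<Sum>S\<in>Pow J. (-1) ^ card S * (1/2) ^ (card I + card S))"
    by (simp add: sum.distrib)
  moreover have "(\<Sum>S\<in>Pow J. (-1) ^ card S * (1/2 :: real) ^ (card I + card S)) = (1/2) ^ n"
    using sum_Pow_alternating_power[OF \<open>finite J\<close>, where k="card I" and x="1/2 :: real"] card_IJ
    by (simp flip: power_add)
  moreover have "integral\<^sup>L (unit_cube {..<n}) (Q_alpha M X n \<alpha>)
      = (\<Sum>S\<in>Pow J. (-1) ^ card S * integral\<^sup>L (unit_cube (I \<union> S)) (copula_marg M X (I \<union> S)))
        - (1/2) ^ n"
    unfolding I_def J_def by (rule integral_Q_alpha_eq_sum_copula_marg[OF assms(1) Xm Xd \<alpha>])
  ultimately show ?thesis
    by simp
qed

theorem mainTheorem3: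
  fixes M :: "'a measure" and X :: "nat \<Rightarrow> 'a \<Rightarrow> real"
    and n :: nat and \<alpha> :: "nat \<Rightarrow> real"
  assumes "n \<ge> 2"
    and "prob_space M"
    and "\<And>i. i < n \<Longrightarrow> X i \<in> borel_measurable M"
    and "\<And>i. i < n \<Longrightarrow> distr M lborel (X i) = uniform_measure lborel {0..1}"
    and "\<And>i. i < n \<Longrightarrow> \<alpha> i \<in> {-1, 1}"
  shows "rho_alpha M X n \<alpha> =
    (2^n * (real n + 1)) / (2^n - (real n + 1)) *
    (\<Sum>S \<in> Pow {i. i < n \<and> \<alpha> i = 1}.
       (let I = {i. i < n \<and> \<alpha> i = -1}; m = card I + card S in
        if m \<le> 1 then 0
        else (-1) ^ card S * ((2 ^ m - (real m + 1)) / (2 ^ m * (real m + 1)))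
             * rho_minus M X (I \<union> S)))"
proof -
  have "(let I = {i. i < n \<and> \<alpha> i = -1}; m = card I + card S in
        if m \<le> 1 then 0
        else (-1) ^ card S * ((2 ^ m - (real m + 1)) / (2 ^ m * (real m + 1)))
             * rho_minus M X (I \<union> S))
      = (-1) ^ card S * rho_weight (card {i. i < n \<and> \<alpha> i = -1} + card S)
        * rho_minus M X ({i. i < n \<and> \<alpha> i = -1} \<union> S)" for S
    unfolding Let_def rho_weight_def[symmetric] by (simp add: rho_weight_eq_0)
  moreover have "integral\<^sup>L (unit_cube {..<n}) (Q_alpha M X n \<alpha>)
      = (\<Sum>S\<in>Pow {i. i < n \<and> \<alpha> i = 1}. (-1) ^ card S
          * rho_weight (card {i. i < n \<and> \<alpha> i = -1} + card S)
          * rho_minus M X ({i. i < n \<and> \<alpha> i = -1} \<union> S))"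
    by (rule integral_Q_alpha_eq_sum_rho_minus[OF assms(2-5)])
  ultimately show ?thesis
    unfolding rho_alpha_def by simp
qed

end
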